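(* Let $\Omega$ be a verification operator for $|\Psi\rangle$ with spectral gap $\nu(\Omega)$, and let $\sigma_1,\dots,\sigma_N$ be density operators on $\mathcal H$. Let $\epsilon_j=1-\langle\Psi|\sigma_j|\Psi\rangle$ and $\bar\epsilon=\frac1N\sum_{j=1}^N\epsilon_j$. Then the probability that the independent states $\sigma_1,\dots,\sigma_N$ pass all $N$ tests satisfies $$\prod_{j=1}^N\mathrm{tr}(\Omega\sigma_j)\le[1-\nu(\Omega)\bar\epsilon]^N.$$
   Context: Let $\mathcal H$ be a finite-dimensional Hilbert space and $|\Psi\rangle\in\mathcal H$ a unit vector. A verification operator for $|\Psi\rangle$ is a Hermitian operator $\Omega$ on $\mathcal H$ with $0\le\Omega\le1$ and $\Omega|\Psi\rangle=|\Psi\rangle$, whose eigenvalue $1$ is nondegenerate; with $\beta(\Omega)$ its second largest eigenvalue, the spectral gap is $\nu(\Omega)=1-\beta(\Omega)$. *)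

theory Defs
  imports "Jordan_Normal_Form.Schur_Decomposition"
begin

definition mtrace :: "complex mat \<Rightarrow> complex" where
  "mtrace A = (\<Sum>i<dim_row A. A $$ (i,i))"

definition hermitian :: "nat \<Rightarrow> complex mat \<Rightarrow> bool" where
  "hermitian n A \<longleftrightarrow> A \<in> carrier_mat n n \<and> mat_adjoint A = A"

text \<open>Positive semidefinite (0 \<le> A): Hermitian with nonnegative expectation values
  (the expectation value of a Hermitian operator is real).\<close>
definition psd :: "nat \<Rightarrow> complex mat \<Rightarrow> bool" where
  "psd n A \<longleftrightarrow> hermitian n A \<and> (\<forall>v\<in>carrier_vec n. 0 \<le> Re ((A *\<^sub>v v) \<bullet>c v))"

definition density_op :: "nat \<Rightarrow> complex mat \<Rightarrow> bool" where
  "density_op n \<rho> \<longleftrightarrow> psd n \<rho> \<and> mtrace \<rho> = 1"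

definition unit_vec :: "nat \<Rightarrow> complex vec \<Rightarrow> bool" where
  "unit_vec n \<psi> \<longleftrightarrow> \<psi> \<in> carrier_vec n \<and> \<psi> \<bullet>c \<psi> = 1"

definition verification_op :: "nat \<Rightarrow> complex vec \<Rightarrow> complex mat \<Rightarrow> bool" where
  "verification_op n \<psi> \<Omega> \<longleftrightarrow>
     psd n \<Omega> \<and> psd n (1\<^sub>m n - \<Omega>) \<and> \<Omega> *\<^sub>v \<psi> = \<psi> \<and>
     (\<forall>v\<in>carrier_vec n. \<Omega> *\<^sub>v v = v \<longrightarrow> (\<exists>c. v = c \<cdot>\<^sub>v \<psi>))"

text \<open>Since eigenvalue 1 is the largest and nondegenerate,
  this is the largest eigenvalue different from 1 (eigenvalues of a Hermitian matrix
  are real). If there is none (dimension 1) we set it to 0.\<close>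
definition second_eig :: "complex mat \<Rightarrow> real" where
  "second_eig \<Omega> =
     (if {k. eigenvalue \<Omega> k \<and> k \<noteq> 1} = {} then 0
      else Max (Re ` {k. eigenvalue \<Omega> k \<and> k \<noteq> 1}))"

definition spectral_gap :: "complex mat \<Rightarrow> real" where
  "spectral_gap \<Omega> = 1 - second_eig \<Omega>"

end

theory Submission
  imports Defs "Jordan_Normal_Form.Spectral_Radius" "HOL-Analysis.Convex"
begin

text \<open>Diagonalise \<open>\<Omega>\<close> in an orthonormal eigenbasis \<open>u\<^sub>k\<close> with real eigenvalues \<open>\<lambda>\<^sub>k\<close>. For a
  density operator \<open>\<sigma>\<close>, \<open>tr(\<Omega>\<sigma>) = \<Sum>\<^sub>k \<lambda>\<^sub>k \<langle>u\<^sub>k|\<sigma>|u\<^sub>k\<rangle>\<close> is an average of the \<open>\<lambda>\<^sub>k\<close> with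
  nonnegative weights summing to 1. Because eigenvalue 1 is nondegenerate, exactly one \<open>u\<^sub>k\<close> is
  a multiple of \<open>\<Psi>\<close>; its weight is \<open>\<langle>\<Psi>|\<sigma>|\<Psi>\<rangle> = 1 - \<epsilon>\<close>, and every other \<open>\<lambda>\<^sub>k\<close> is at
  most \<open>\<beta>(\<Omega>)\<close>. Hence \<open>0 \<le> tr(\<Omega>\<sigma>) \<le> 1 - \<nu>(\<Omega>) \<epsilon>\<close>, and the AM-GM inequality turns these
  \<open>N\<close> bounds into the bound on the product.\<close>

section \<open>Adjoints and unitary matrices\<close>

lemma mat_adjoint_dim [simp]:
  "dim_row (mat_adjoint A) = dim_col A" "dim_col (mat_adjoint A) = dim_row A"
  by (auto simp: mat_adjoint_def)

lemma mat_adjoint_carrier [simp]: "A \<in> carrier_mat n m \<Longrightarrow> mat_adjoint A \<in> carrier_mat m n"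
  by (metis carrier_matD carrier_matI mat_adjoint_dim)

lemma row_mat_adjoint [simp]:
  "i < dim_col A \<Longrightarrow> row (mat_adjoint A) i = conjugate (col A i)"
  unfolding mat_adjoint_def by (subst mat_of_rows_row) auto

lemma index_mat_adjoint [simp]:
  "i < dim_col A \<Longrightarrow> j < dim_row A \<Longrightarrow>
    mat_adjoint (A :: complex mat) $$ (i,j) = cnj (A $$ (j,i))"
  by (simp add: mat_adjoint_def mat_of_rows_def col_def)

lemma cscalar_prod_smult_right [simp]: "x \<bullet>c (a \<cdot>\<^sub>v y) = cnj a * (x \<bullet>c (y :: complex vec))"
  by (simp add: scalar_prod_def sum_distrib_left mult_ac)

lemma cnj_cscalar_prod:
  "x \<in> carrier_vec n \<Longrightarrow> y \<in> carrier_vec n \<Longrightarrow> cnj (x \<bullet>c y) = y \<bullet>c (x :: complex vec)"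
  by (metis conjugate_complex_def conjugate_conjugate_sprod conjugate_vec_sprod_comm)

lemma mult_adjoint_index:
  assumes "U \<in> carrier_mat n m" "V \<in> carrier_mat n k" "i < m" "j < k"
  shows "(mat_adjoint U * V) $$ (i,j) = col V j \<bullet>c col U i"
  using assms by (simp add: conjugate_vec_sprod_comm[of _ n])

lemma mult_adjoint_mat_vec_index:
  assumes "U \<in> carrier_mat n m" "x \<in> carrier_vec n" "i < m"
  shows "(mat_adjoint U *\<^sub>v x) $ i = x \<bullet>c col U i"
  using assms by (simp add: conjugate_vec_sprod_comm[of _ n])

lemma cscalar_prod_mult_mat_vec_left:
  assumes A: "A \<in> carrier_mat n m" and x: "x \<in> carrier_vec m" and y: "y \<in> carrier_vec n"
  shows "(A *\<^sub>v x) \<bullet>c y = x \<bullet>c (mat_adjoint A *\<^sub>v (y :: complex vec))"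
proof -
  have "(A *\<^sub>v x) \<bullet>c y = (\<Sum>i<n. \<Sum>j<m. A $$ (i,j) * x $ j * cnj (y $ i))"
    using A x y by (simp add: scalar_prod_def sum_distrib_right atLeast0LessThan)
  also have "\<dots> = (\<Sum>j<m. \<Sum>i<n. x $ j * cnj (cnj (A $$ (i,j)) * y $ i))"
    by (subst sum.swap) (simp add: mult_ac)
  also have "\<dots> = x \<bullet>c (mat_adjoint A *\<^sub>v y)"
    using A x y by (simp add: scalar_prod_def sum_distrib_left cnj_sum atLeast0LessThan)
  finally show ?thesis .
qed

lemma hermitian_cscalar_prod_swap:
  "hermitian n A \<Longrightarrow> x \<in> carrier_vec n \<Longrightarrow> y \<in> carrier_vec n \<Longrightarrow>
    (A *\<^sub>v x) \<bullet>c y = x \<bullet>c (A *\<^sub>v y)"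
  unfolding hermitian_def using cscalar_prod_mult_mat_vec_left by metis

lemma hermitian_eigenvalue_real:
  assumes A: "hermitian n A" and v: "v \<in> carrier_vec n" "v \<noteq> 0\<^sub>v n"
    and ev: "A *\<^sub>v v = e \<cdot>\<^sub>v v"
  shows "e \<in> \<real>"
proof -
  have "e * (v \<bullet>c v) = cnj e * (v \<bullet>c v)"
    using hermitian_cscalar_prod_swap[OF A v(1) v(1)] ev v(1) by simp
  moreover have "v \<bullet>c v \<noteq> 0" using v by simp
  ultimately show ?thesis by (simp add: Reals_cnj_iff)
qed

definition unitary :: "nat \<Rightarrow> complex mat \<Rightarrow> bool" where
  "unitary n U \<longleftrightarrow> U \<in> carrier_mat n n \<and> mat_adjoint U * U = 1\<^sub>m n"

lemma unitary_iff_orthonormal_cols: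
  "unitary n U \<longleftrightarrow>
    U \<in> carrier_mat n n \<and> (\<forall>i<n. \<forall>j<n. col U i \<bullet>c col U j = (if i = j then 1 else 0))"
proof (cases "U \<in> carrier_mat n n")
  case True
  then have "mat_adjoint U * U = 1\<^sub>m n \<longleftrightarrow>
      (\<forall>i<n. \<forall>j<n. (mat_adjoint U * U) $$ (j,i) = 1\<^sub>m n $$ (j,i))"
    by (auto intro!: eq_matI simp del: index_mult_mat(1))
  also have "\<dots> \<longleftrightarrow> (\<forall>i<n. \<forall>j<n. col U i \<bullet>c col U j = (if i = j then 1 else 0))"
    using True by (auto simp: mult_adjoint_index simp del: index_mult_mat(1))
  finally show ?thesis using True unfolding unitary_def by simp
qed (simp add: unitary_def)

lemma unitary_carrier: "unitary n U \<Longrightarrow> U \<in> carrier_mat n n"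
  by (simp add: unitary_def)

lemma unitary_col_cscalar_prod:
  "unitary n U \<Longrightarrow> i < n \<Longrightarrow> j < n \<Longrightarrow> col U i \<bullet>c col U j = (if i = j then 1 else 0)"
  by (simp add: unitary_iff_orthonormal_cols)

lemma unitary_mult_adjoint: "unitary n U \<Longrightarrow> U * mat_adjoint U = 1\<^sub>m n"
  unfolding unitary_def by (metis mat_adjoint_carrier mat_mult_left_right_inverse)

lemma unitary_cscalar_prod:
  assumes U: "unitary n U" and x: "x \<in> carrier_vec n" and y: "y \<in> carrier_vec n"
  shows "(U *\<^sub>v x) \<bullet>c (U *\<^sub>v y) = x \<bullet>c y"
proof -
  have U': "U \<in> carrier_mat n n" "mat_adjoint U * U = 1\<^sub>m n" using U by (auto simp: unitary_def)
  have "mat_adjoint U *\<^sub>v (U *\<^sub>v y) = y"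
    using U' y by (metis assoc_mult_mat_vec mat_adjoint_carrier one_mult_mat_vec)
  then show ?thesis
    using U' x y by (simp add: cscalar_prod_mult_mat_vec_left)
qed

lemma unitary_mult:
  assumes U: "unitary n U" and V: "unitary n V"
  shows "unitary n (U * V)"
  unfolding unitary_iff_orthonormal_cols
proof (intro conjI allI impI)
  have Uc: "U \<in> carrier_mat n n" and Vc: "V \<in> carrier_mat n n"
    using U V by (auto simp: unitary_def)
  then show "U * V \<in> carrier_mat n n" by simp
  fix i j assume "i < n" "j < n"
  then show "col (U * V) i \<bullet>c col (U * V) j = (if i = j then 1 else 0)"
    using Uc Vc unitary_cscalar_prod[OF U] unitary_col_cscalar_prod[OF V]
    by (simp del: col_mult)
qed

lemma unitary_exists_col_not_orthogonal:
  assumes U: "unitary n U" and x: "x \<in> carrier_vec n" "x \<noteq> 0\<^sub>v n"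
  shows "\<exists>k<n. x \<bullet>c col U k \<noteq> 0"
proof (rule ccontr)
  assume "\<not> ?thesis"
  then have "mat_adjoint U *\<^sub>v x = 0\<^sub>v n"
    using U x by (intro eq_vecI)
      (auto simp: unitary_def mult_adjoint_mat_vec_index simp del: index_mult_mat_vec)
  then have "(U * mat_adjoint U) *\<^sub>v x = 0\<^sub>v n"
    using U x by (subst assoc_mult_mat_vec[of _ n n _ n]) (auto simp: unitary_def)
  then show False using x unitary_mult_adjoint[OF U] by simp
qed

section \<open>The spectral theorem for Hermitian matrices\<close>

lemma smult_vCons: "c \<cdot>\<^sub>v vCons a v = vCons (c * a) (c \<cdot>\<^sub>v v)"
  by (rule eq_vecI) (auto simp: vec_index_vCons)

lemma mult_mat_vec_vCons_block:
  assumes M: "M \<in> carrier_mat (Suc m) (Suc m)" and x: "x \<in> carrier_vec m"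
    and col0: "\<And>i. i < Suc m \<Longrightarrow> M $$ (i,0) = (if i = 0 then e else 0)"
    and row0: "\<And>j. j < m \<Longrightarrow> M $$ (0, Suc j) = 0"
  shows "M *\<^sub>v vCons a x = vCons (e * a) (mat m m (\<lambda>(i,j). M $$ (Suc i, Suc j)) *\<^sub>v x)"
proof (rule eq_vecI)
  fix i assume "i < dim_vec (vCons (e * a) (mat m m (\<lambda>(i,j). M $$ (Suc i, Suc j)) *\<^sub>v x))"
  then have i: "i < Suc m" by simp
  have "(M *\<^sub>v vCons a x) $ i = M $$ (i,0) * a + (\<Sum>j<m. M $$ (i, Suc j) * x $ j)"
    using M x i
    by (simp add: scalar_prod_def atLeast0LessThan sum.lessThan_Suc_shift del: sum.lessThan_Suc)
  then show "(M *\<^sub>v vCons a x) $ i = vCons (e * a) (mat m m (\<lambda>(i,j). M $$ (Suc i, Suc j)) *\<^sub>v x) $ i"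
    using i x by (cases i) (simp_all add: col0 row0 scalar_prod_def atLeast0LessThan)
qed (use M in simp)

definition normalize_vec :: "complex vec \<Rightarrow> complex vec" where
  "normalize_vec v = complex_of_real (1 / sqrt (Re (v \<bullet>c v))) \<cdot>\<^sub>v v"

lemma normalize_vec_carrier [simp]: "v \<in> carrier_vec n \<Longrightarrow> normalize_vec v \<in> carrier_vec n"
  by (simp add: normalize_vec_def)

lemma normalize_vec_cscalar_prod:
  assumes "v \<in> carrier_vec n" "w \<in> carrier_vec n"
  shows "normalize_vec v \<bullet>c normalize_vec w =
    (v \<bullet>c w) / complex_of_real (sqrt (Re (v \<bullet>c v)) * sqrt (Re (w \<bullet>c w)))"
  using assms by (simp add: normalize_vec_def field_simps)

lemma normalize_vec_norm:
  assumes v: "v \<in> carrier_vec n" "v \<noteq> 0\<^sub>v n"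
  shows "normalize_vec v \<bullet>c normalize_vec v = 1"
proof -
  have "v \<bullet>c v > 0" using v by simp
  then obtain r where r: "v \<bullet>c v = complex_of_real r" "r > 0"
    by (auto simp: less_complex_def complex_eq_iff intro: that[of "Re (v \<bullet>c v)"])
  then show ?thesis by (simp add: normalize_vec_cscalar_prod[OF v(1) v(1)])
qed

lemma normalize_vec_unit: "v \<bullet>c v = 1 \<Longrightarrow> normalize_vec v = v"
  by (simp add: normalize_vec_def)

lemma unitary_normalize_corthogonal:
  assumes ws: "set ws \<subseteq> carrier_vec n" "corthogonal ws" "length ws = n"
  shows "unitary n (mat_of_cols n (map normalize_vec ws))"
  unfolding unitary_iff_orthonormal_cols
proof (intro conjI allI impI)
  show "mat_of_cols n (map normalize_vec ws) \<in> carrier_mat n n"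
    using mat_of_cols_carrier(1)[of n "map normalize_vec ws"] ws(3) by simp
  fix i j assume ij: "i < n" "j < n"
  have wsi: "ws ! i \<in> carrier_vec n" "ws ! j \<in> carrier_vec n" using ws ij by auto
  have orth: "ws ! i \<bullet>c ws ! j = 0 \<longleftrightarrow> i \<noteq> j"
    using corthogonalD[OF ws(2)] ij ws(3) by simp
  have "normalize_vec (ws ! i) \<bullet>c normalize_vec (ws ! j) = (if i = j then 1 else 0)"
  proof (cases "i = j")
    case True
    then have "ws ! i \<noteq> 0\<^sub>v n" using orth wsi by auto
    then show ?thesis using True normalize_vec_norm[OF wsi(1)] by simp
  next
    case False
    then show ?thesis using orth wsi by (simp add: normalize_vec_cscalar_prod[of _ n])
  qed
  then show "col (mat_of_cols n (map normalize_vec ws)) i \<bullet>c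
      col (mat_of_cols n (map normalize_vec ws)) j = (if i = j then 1 else 0)"
    using ij ws(3) wsi by simp
qed

lemma exists_unitary_first_col:
  assumes v: "v \<in> carrier_vec n" "v \<bullet>c v = 1"
  obtains W where "unitary n W" "col W 0 = v"
proof -
  have v0: "v \<noteq> 0\<^sub>v n" using v by auto
  then have "n > 0" using v by (auto intro: Nat.gr0I)
  interpret cof_vec_space n "TYPE(complex)" .
  define b where "b = basis_completion v"
  from basis_completion[OF v(1) v0, folded b_def]
  have b: "distinct b" "\<not> lin_dep (set b)" "set b \<subseteq> carrier_vec n" "hd b = v" "length b = n"
    by auto
  with \<open>n > 0\<close> obtain vs where bv: "b = v # vs" by (cases b) auto
  define ws where "ws = gram_schmidt n b"
  from gram_schmidt_result[OF b(3,1,2) refl, folded ws_def]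
  have ws: "set ws \<subseteq> carrier_vec n" "corthogonal ws" "length ws = n"
    by (auto simp: b(5))
  have "hd ws = v" using gram_schmidt_hd[OF v(1), of vs] bv by (simp add: ws_def)
  then have "ws ! 0 = v" using \<open>n > 0\<close> ws(3) by (cases ws) auto
  then have "col (mat_of_cols n (map normalize_vec ws)) 0 = v"
    using \<open>n > 0\<close> ws v(1) normalize_vec_unit[OF v(2)] by simp
  with unitary_normalize_corthogonal[OF ws] show ?thesis by (rule that)
qed

lemma exists_unitary_first_col_eigenvector:
  assumes A: "A \<in> carrier_mat n n" and v: "v \<in> carrier_vec n" "v \<noteq> 0\<^sub>v n"
    and eig: "A *\<^sub>v v = e \<cdot>\<^sub>v v"
  obtains W where "unitary n W" "A *\<^sub>v col W 0 = e \<cdot>\<^sub>v col W 0"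
proof -
  obtain W where W: "unitary n W" "col W 0 = normalize_vec v"
    using exists_unitary_first_col normalize_vec_carrier normalize_vec_norm v by metis
  moreover have "A *\<^sub>v normalize_vec v = e \<cdot>\<^sub>v normalize_vec v"
    using A v eig by (simp add: normalize_vec_def mult_mat_vec smult_smult_assoc mult.commute)
  ultimately show ?thesis using that by simp
qed

lemma unitary_block_diag:
  assumes U: "unitary m U"
  obtains B where "unitary (Suc m) B" "col B 0 = vCons 1 (0\<^sub>v m)"
    "\<And>k. k < m \<Longrightarrow> col B (Suc k) = vCons 0 (col U k)"
proof -
  have Uc: "U \<in> carrier_mat m m" using U by (rule unitary_carrier)
  define f where "f k = (case k of 0 \<Rightarrow> vCons 1 (0\<^sub>v m) | Suc k' \<Rightarrow> vCons 0 (col U k'))" for k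
  have f: "f k \<in> carrier_vec (Suc m)" for k using Uc by (cases k) (auto simp: f_def)
  define B where "B = mat_of_cols (Suc m) (map f [0..<Suc m])"
  have colB: "col B k = f k" if "k < Suc m" for k using that f by (simp add: B_def del: upt_Suc)
  have "unitary (Suc m) B"
    unfolding unitary_iff_orthonormal_cols
  proof (intro conjI allI impI)
    show "B \<in> carrier_mat (Suc m) (Suc m)"
      using mat_of_cols_carrier(1)[of "Suc m" "map f [0..<Suc m]"] by (simp add: B_def del: upt_Suc)
    fix i j assume "i < Suc m" "j < Suc m"
    then show "col B i \<bullet>c col B j = (if i = j then 1 else 0)"
      using unitary_col_cscalar_prod[OF U] Uc
      by (cases i; cases j) (auto simp: colB f_def)
  qed
  then show ?thesis using that colB by (simp add: f_def)
qed

lemma hermitian_gram_mat: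
  assumes A: "hermitian n A" and w: "\<And>j. w j \<in> carrier_vec n"
  shows "hermitian m (mat m m (\<lambda>(i,j). (A *\<^sub>v w j) \<bullet>c w i))"
  unfolding hermitian_def
proof (intro conjI eq_matI)
  have Ac: "A \<in> carrier_mat n n" using A by (simp add: hermitian_def)
  fix i j assume "i < dim_row (mat m m (\<lambda>(i,j). (A *\<^sub>v w j) \<bullet>c w i))"
    "j < dim_col (mat m m (\<lambda>(i,j). (A *\<^sub>v w j) \<bullet>c w i))"
  then have ij: "i < m" "j < m" by auto
  then have "mat_adjoint (mat m m (\<lambda>(i,j). (A *\<^sub>v w j) \<bullet>c w i)) $$ (i,j) =
      cnj ((A *\<^sub>v w i) \<bullet>c w j)"
    by simp
  also have "\<dots> = w j \<bullet>c (A *\<^sub>v w i)"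
    by (rule cnj_cscalar_prod) (use Ac w in auto)
  also have "\<dots> = (A *\<^sub>v w j) \<bullet>c w i"
    by (rule hermitian_cscalar_prod_swap[OF A w w, symmetric])
  finally show "mat_adjoint (mat m m (\<lambda>(i,j). (A *\<^sub>v w j) \<bullet>c w i)) $$ (i,j) =
      mat m m (\<lambda>(i,j). (A *\<^sub>v w j) \<bullet>c w i) $$ (i,j)"
    using ij by simp
qed auto

text \<open>\<open>C\<close> is the matrix of \<open>A\<close> restricted to the orthogonal complement of the eigenvector
  \<open>col W 0\<close>, written in the orthonormal basis formed by the remaining columns of \<open>W\<close>.\<close>

lemma hermitian_compression:
  assumes A: "hermitian (Suc m) A" and W: "unitary (Suc m) W"
    and eig: "A *\<^sub>v col W 0 = e \<cdot>\<^sub>v col W 0"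
  defines "C \<equiv> mat m m (\<lambda>(i,j). (A *\<^sub>v col W (Suc j)) \<bullet>c col W (Suc i))"
  shows "hermitian m C"
    and "x \<in> carrier_vec m \<Longrightarrow> A *\<^sub>v (W *\<^sub>v vCons a x) = W *\<^sub>v vCons (e * a) (C *\<^sub>v x)"
proof -
  have Ac: "A \<in> carrier_mat (Suc m) (Suc m)" using A by (simp add: hermitian_def)
  have Wc: "W \<in> carrier_mat (Suc m) (Suc m)" using W by (rule unitary_carrier)
  have w: "col W j \<in> carrier_vec (Suc m)" for j using Wc by (metis carrier_matD(1) col_dim)
  show "hermitian m C"
    unfolding C_def using hermitian_gram_mat[OF A, of "\<lambda>j. col W (Suc j)" m] w by simp
  define A' where "A' = mat_adjoint W * (A * W)"
  have A': "A' \<in> carrier_mat (Suc m) (Suc m)"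
    using Ac Wc by (metis A'_def mat_adjoint_carrier mult_carrier_mat)
  have A'_index: "A' $$ (i,j) = (A *\<^sub>v col W j) \<bullet>c col W i" if "i < Suc m" "j < Suc m" for i j
    unfolding A'_def using that Ac Wc
    by (subst mult_adjoint_index[of _ "Suc m" "Suc m" _ "Suc m"]) (auto simp del: col_mult)
  have A'_col0: "A' $$ (i,0) = (if i = 0 then e else 0)" if "i < Suc m" for i
    using that w unitary_col_cscalar_prod[OF W] by (simp add: A'_index eig)
  have A'_row0: "A' $$ (0, Suc j) = 0" if "j < m" for j
  proof -
    have "A' $$ (0, Suc j) = col W (Suc j) \<bullet>c (A *\<^sub>v col W 0)"
      using that by (simp add: A'_index hermitian_cscalar_prod_swap[OF A w w])
    also have "\<dots> = cnj e * (col W (Suc j) \<bullet>c col W 0)"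
      unfolding eig by (rule cscalar_prod_smult_right)
    also have "\<dots> = 0" using that unitary_col_cscalar_prod[OF W] by simp
    finally show ?thesis .
  qed
  have C_block: "C = mat m m (\<lambda>(i,j). A' $$ (Suc i, Suc j))"
    by (rule eq_matI) (simp_all add: C_def A'_index)
  have "W * A' = (W * mat_adjoint W) * (A * W)"
    using Ac Wc by (simp add: A'_def assoc_mult_mat[of _ "Suc m" "Suc m" _ "Suc m" _ "Suc m"])
  then have AW: "A * W = W * A'" using Ac Wc by (simp add: unitary_mult_adjoint[OF W])
  assume x: "x \<in> carrier_vec m"
  have "A *\<^sub>v (W *\<^sub>v vCons a x) = (A * W) *\<^sub>v vCons a x"
    by (rule assoc_mult_mat_vec[symmetric]) (use Ac Wc x in auto)
  also have "\<dots> = W *\<^sub>v (A' *\<^sub>v vCons a x)"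
    unfolding AW by (rule assoc_mult_mat_vec) (use Wc A' x in auto)
  also have "\<dots> = W *\<^sub>v vCons (e * a) (C *\<^sub>v x)"
    unfolding C_block by (simp only: mult_mat_vec_vCons_block[OF A' x A'_col0 A'_row0])
  finally show "A *\<^sub>v (W *\<^sub>v vCons a x) = W *\<^sub>v vCons (e * a) (C *\<^sub>v x)" .
qed

text \<open>The Schur decomposition of Jordan_Normal_Form uses orthogonal but unnormalised bases,
  so the unitary diagonalisation is obtained here directly, by deflation.\<close>

theorem hermitian_spectral:
  assumes "hermitian n A"
  shows "\<exists>U (lam :: nat \<Rightarrow> real). unitary n U \<and>
    (\<forall>k<n. A *\<^sub>v col U k = complex_of_real (lam k) \<cdot>\<^sub>v col U k)"
  using assms
proof (induction n arbitrary: A)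
  case 0
  have "unitary 0 (1\<^sub>m 0)" by (simp add: unitary_iff_orthonormal_cols)
  then show ?case by blast
next
  case (Suc m)
  have Ac: "A \<in> carrier_mat (Suc m) (Suc m)" using Suc.prems by (simp add: hermitian_def)
  obtain e v where v: "v \<in> carrier_vec (Suc m)" "v \<noteq> 0\<^sub>v (Suc m)" "A *\<^sub>v v = e \<cdot>\<^sub>v v"
    using spectrum_non_empty[OF Ac] Ac by (auto simp: spectrum_def eigenvalue_def eigenvector_def)
  have e: "e \<in> \<real>" by (rule hermitian_eigenvalue_real[OF Suc.prems v])
  obtain W where W: "unitary (Suc m) W" and W0: "A *\<^sub>v col W 0 = e \<cdot>\<^sub>v col W 0"
    using exists_unitary_first_col_eigenvector[OF Ac v] by blast
  from hermitian_compression[OF Suc.prems W W0]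
  obtain C where C: "hermitian m C"
    and AW: "\<And>a x. x \<in> carrier_vec m \<Longrightarrow>
      A *\<^sub>v (W *\<^sub>v vCons a x) = W *\<^sub>v vCons (e * a) (C *\<^sub>v x)"
    by blast
  obtain U' lam' where U': "unitary m U'"
    and eig': "\<And>k. k < m \<Longrightarrow> C *\<^sub>v col U' k = complex_of_real (lam' k) \<cdot>\<^sub>v col U' k"
    using Suc.IH[OF C] by blast
  obtain B where B: "unitary (Suc m) B" "col B 0 = vCons 1 (0\<^sub>v m)"
    "\<And>k. k < m \<Longrightarrow> col B (Suc k) = vCons 0 (col U' k)"
    using unitary_block_diag[OF U'] by blast
  have Wc: "W \<in> carrier_mat (Suc m) (Suc m)" and Bc: "B \<in> carrier_mat (Suc m) (Suc m)"
    and U'c: "U' \<in> carrier_mat m m"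
    using W B(1) U' by (auto simp: unitary_def)
  define lam where "lam k = (case k of 0 \<Rightarrow> Re e | Suc k' \<Rightarrow> lam' k')" for k
  have "A *\<^sub>v col (W * B) k = complex_of_real (lam k) \<cdot>\<^sub>v col (W * B) k" if "k < Suc m" for k
  proof (cases k)
    case 0
    have "C *\<^sub>v 0\<^sub>v m = e \<cdot>\<^sub>v 0\<^sub>v m" using C by (intro eq_vecI) (auto simp: hermitian_def)
    then have "A *\<^sub>v (W *\<^sub>v vCons 1 (0\<^sub>v m)) = W *\<^sub>v (e \<cdot>\<^sub>v vCons 1 (0\<^sub>v m))"
      using AW[of "0\<^sub>v m" 1] by (simp add: smult_vCons)
    then show ?thesis
      using 0 Wc Bc B(2) e by (simp add: mult_mat_vec lam_def del: col_mult)
  next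
    case (Suc k')
    then have k': "k' < m" using that by simp
    have "A *\<^sub>v (W *\<^sub>v vCons 0 (col U' k')) = W *\<^sub>v (lam' k' \<cdot>\<^sub>v vCons 0 (col U' k'))"
      using AW[of "col U' k'" 0] U'c eig'[OF k'] by (simp add: smult_vCons carrier_vecI)
    then show ?thesis
      using Suc k' Wc Bc B(3) U'c by (simp add: mult_mat_vec lam_def del: col_mult)
  qed
  then show ?case using unitary_mult[OF W B(1)] by blast
qed

section \<open>Traces and verification operators\<close>

lemma mtrace_mult_commute:
  assumes "A \<in> carrier_mat n m" "B \<in> carrier_mat m n"
  shows "mtrace (A * B) = mtrace (B * A)"
  using assms unfolding mtrace_def
  by (simp add: scalar_prod_def atLeast0LessThan sum.swap[of _ "{..<n}"] mult.commute)

lemma mtrace_unitary: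
  assumes U: "unitary n U" and M: "M \<in> carrier_mat n n"
  shows "mtrace M = (\<Sum>k<n. (M *\<^sub>v col U k) \<bullet>c col U k)"
proof -
  have Uc: "U \<in> carrier_mat n n" using U by (rule unitary_carrier)
  have "mtrace M = mtrace ((M * U) * mat_adjoint U)"
    using M Uc by (simp add: assoc_mult_mat[of _ n n _ n _ n] unitary_mult_adjoint[OF U])
  also have "\<dots> = mtrace (mat_adjoint U * (M * U))"
    using M Uc by (intro mtrace_mult_commute[of _ n n]) auto
  also have "\<dots> = (\<Sum>k<n. (M *\<^sub>v col U k) \<bullet>c col U k)"
    using M Uc unfolding mtrace_def
    by (intro sum.cong)
      (auto simp: mult_adjoint_index[of _ n n _ n] simp del: index_mult_mat(1) col_mult)
  finally show ?thesis .
qed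

lemma mtrace_mult_eigenbasis:
  assumes A: "hermitian n A" and U: "unitary n U" and B: "B \<in> carrier_mat n n"
    and eig: "\<And>k. k < n \<Longrightarrow> A *\<^sub>v col U k = complex_of_real (lam k) \<cdot>\<^sub>v col U k"
  shows "mtrace (A * B) = (\<Sum>k<n. complex_of_real (lam k) * ((B *\<^sub>v col U k) \<bullet>c col U k))"
proof -
  have Ac: "A \<in> carrier_mat n n" and u: "\<And>k. col U k \<in> carrier_vec n"
    using A U by (auto simp: hermitian_def unitary_def)
  have "mtrace (A * B) = (\<Sum>k<n. ((A * B) *\<^sub>v col U k) \<bullet>c col U k)"
    using Ac B by (simp add: mtrace_unitary[OF U])
  also have "\<dots> = (\<Sum>k<n. complex_of_real (lam k) * ((B *\<^sub>v col U k) \<bullet>c col U k))"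
    using B u by (intro sum.cong)
      (simp_all add: assoc_mult_mat_vec[OF Ac B u] hermitian_cscalar_prod_swap[OF A] eig)
  finally show ?thesis .
qed

lemma eigenvector_le_second_eig:
  assumes A: "A \<in> carrier_mat n n" and v: "v \<in> carrier_vec n" "v \<noteq> 0\<^sub>v n"
    and eig: "A *\<^sub>v v = complex_of_real l \<cdot>\<^sub>v v" and "l \<noteq> 1"
  shows "l \<le> second_eig A"
proof -
  let ?S = "{k. eigenvalue A k \<and> k \<noteq> 1}"
  have "finite ?S"
    using card_finite_spectrum(1)[OF A] by (rule rev_finite_subset) (auto simp: spectrum_def)
  moreover have l: "complex_of_real l \<in> ?S"
    using assms unfolding eigenvalue_def eigenvector_def by auto
  ultimately have "Re (complex_of_real l) \<le> Max (Re ` ?S)" by (intro Max_ge finite_imageI imageI)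
  moreover have "?S \<noteq> {}" using l by blast
  then have "second_eig A = Max (Re ` ?S)" unfolding second_eig_def by (simp only: if_False)
  ultimately show ?thesis by simp
qed

lemma psd_eigenvalue_nonneg:
  assumes "psd n A" "v \<in> carrier_vec n" "v \<bullet>c v = 1" "A *\<^sub>v v = complex_of_real l \<cdot>\<^sub>v v"
  shows "0 \<le> l"
  using assms unfolding psd_def by (metis Re_complex_of_real mult.right_neutral
      smult_scalar_prod_distrib carrier_vec_conjugate)

lemma convex_combination_le_except:
  fixes lam q :: "'a \<Rightarrow> real"
  assumes "finite K" "k0 \<in> K" "(\<Sum>k\<in>K. q k) = 1" "\<And>k. k \<in> K \<Longrightarrow> 0 \<le> q k"
    and "lam k0 = 1" "\<And>k. k \<in> K \<Longrightarrow> k \<noteq> k0 \<Longrightarrow> lam k \<le> b"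
  shows "(\<Sum>k\<in>K. lam k * q k) \<le> q k0 + b * (1 - q k0)"
proof -
  have split: "(\<Sum>k\<in>K. f k) = f k0 + (\<Sum>k\<in>K - {k0}. f k)" for f :: "'a \<Rightarrow> real"
    using assms(1,2) by (simp add: sum.remove)
  have "(\<Sum>k\<in>K - {k0}. lam k * q k) \<le> (\<Sum>k\<in>K - {k0}. b * q k)"
    using assms(4,6) by (intro sum_mono mult_right_mono) auto
  also have "\<dots> = b * (1 - q k0)"
    using assms(3) split[of q] by (simp add: sum_distrib_left[symmetric])
  finally show ?thesis using split[of "\<lambda>k. lam k * q k"] assms(5) by simp
qed

lemma verification_op_eigenbasis:
  assumes psi: "unit_vec n \<psi>" and V: "verification_op n \<psi> \<Omega>" and U: "unitary n U"
    and eig: "\<And>k. k < n \<Longrightarrow> \<Omega> *\<^sub>v col U k = complex_of_real (lam k) \<cdot>\<^sub>v col U k"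
  obtains k0 where "k0 < n" "lam k0 = 1" "\<And>k. k < n \<Longrightarrow> lam k = 1 \<Longrightarrow> k = k0"
    "\<And>M. M \<in> carrier_mat n n \<Longrightarrow> (M *\<^sub>v col U k0) \<bullet>c col U k0 = (M *\<^sub>v \<psi>) \<bullet>c \<psi>"
proof -
  have psic: "\<psi> \<in> carrier_vec n" "\<psi> \<bullet>c \<psi> = 1" using psi by (auto simp: unit_vec_def)
  have H: "hermitian n \<Omega>" and fix1: "\<Omega> *\<^sub>v \<psi> = \<psi>"
    and nd: "\<And>v. v \<in> carrier_vec n \<Longrightarrow> \<Omega> *\<^sub>v v = v \<Longrightarrow> \<exists>c. v = c \<cdot>\<^sub>v \<psi>"
    using V by (auto simp: verification_op_def psd_def)
  have u: "col U k \<in> carrier_vec n" for k using U by (auto simp: unitary_def)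
  have fixed_multiple: "\<exists>c. col U k = c \<cdot>\<^sub>v \<psi>" if "k < n" "lam k = 1" for k
    using nd[OF u] eig[OF that(1)] that(2) by simp
  have "\<psi> \<noteq> 0\<^sub>v n" using psic by auto
  then obtain k0 where k0: "k0 < n" "\<psi> \<bullet>c col U k0 \<noteq> 0"
    using unitary_exists_col_not_orthogonal[OF U psic(1)] by blast
  have "\<psi> \<bullet>c col U k0 = \<psi> \<bullet>c (\<Omega> *\<^sub>v col U k0)"
    using hermitian_cscalar_prod_swap[OF H psic(1) u] fix1 by simp
  also have "\<dots> = complex_of_real (lam k0) * (\<psi> \<bullet>c col U k0)"
    using eig[OF k0(1)] psic u by simp
  finally have lam0: "lam k0 = 1" using k0(2) by (metis mult_cancel_right1 of_real_eq_1_iff)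
  obtain c where c: "col U k0 = c \<cdot>\<^sub>v \<psi>" using fixed_multiple[OF k0(1) lam0] by blast
  have cc: "c * cnj c = 1"
    using unitary_col_cscalar_prod[OF U k0(1) k0(1)] psic by (simp add: c mult.commute)
  moreover have "k = k0" if k: "k < n" "lam k = 1" for k
  proof (rule ccontr)
    assume "k \<noteq> k0"
    obtain c' where c': "col U k = c' \<cdot>\<^sub>v \<psi>" using fixed_multiple[OF k] by blast
    have "c' = 0"
      using unitary_col_cscalar_prod[OF U k(1) k0(1)] \<open>k \<noteq> k0\<close> psic cc by (auto simp: c c')
    then show False using unitary_col_cscalar_prod[OF U k(1) k(1)] psic by (simp add: c')
  qed
  moreover have "(M *\<^sub>v col U k0) \<bullet>c col U k0 = (M *\<^sub>v \<psi>) \<bullet>c \<psi>" if M: "M \<in> carrier_mat n n" for M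
  proof -
    have "(M *\<^sub>v col U k0) \<bullet>c col U k0 = (c * cnj c) * ((M *\<^sub>v \<psi>) \<bullet>c \<psi>)"
      using M psic mult_mat_vec_carrier[OF M psic(1)] by (simp add: c mult_mat_vec)
    then show ?thesis using cc by simp
  qed
  ultimately show ?thesis using that k0(1) lam0 by blast
qed

lemma verification_op_trace_bound:
  assumes psi: "unit_vec n \<psi>" and V: "verification_op n \<psi> \<Omega>" and D: "density_op n \<sigma>"
  shows "0 \<le> Re (mtrace (\<Omega> * \<sigma>))"
    and "Re (mtrace (\<Omega> * \<sigma>)) \<le> 1 - spectral_gap \<Omega> * (1 - Re ((\<sigma> *\<^sub>v \<psi>) \<bullet>c \<psi>))"
proof -
  have H: "hermitian n \<Omega>" and \<Omega>_psd: "psd n \<Omega>" using V by (auto simp: verification_op_def psd_def)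
  have \<sigma>c: "\<sigma> \<in> carrier_mat n n" and tr1: "mtrace \<sigma> = 1"
    and \<sigma>_psd: "\<And>v. v \<in> carrier_vec n \<Longrightarrow> 0 \<le> Re ((\<sigma> *\<^sub>v v) \<bullet>c v)"
    using D by (auto simp: density_op_def psd_def hermitian_def)
  obtain U and lam :: "nat \<Rightarrow> real" where U: "unitary n U"
    and eig: "\<And>k. k < n \<Longrightarrow> \<Omega> *\<^sub>v col U k = complex_of_real (lam k) \<cdot>\<^sub>v col U k"
    using hermitian_spectral[OF H] by blast
  have u: "\<And>k. col U k \<in> carrier_vec n" using U by (auto simp: unitary_def)
  define q where "q k = Re ((\<sigma> *\<^sub>v col U k) \<bullet>c col U k)" for k
  have q_nonneg: "0 \<le> q k" for k using \<sigma>_psd[OF u] by (simp add: q_def)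
  have q_sum: "(\<Sum>k<n. q k) = 1"
    using arg_cong[OF mtrace_unitary[OF U \<sigma>c], of Re] tr1 by (simp add: q_def Re_sum)
  have trace: "Re (mtrace (\<Omega> * \<sigma>)) = (\<Sum>k<n. lam k * q k)"
    using mtrace_mult_eigenbasis[OF H U \<sigma>c eig] by (simp add: q_def Re_sum)
  obtain k0 where k0: "k0 < n" "lam k0 = 1" and unique: "\<And>k. k < n \<Longrightarrow> lam k = 1 \<Longrightarrow> k = k0"
    and q0: "q k0 = Re ((\<sigma> *\<^sub>v \<psi>) \<bullet>c \<psi>)"
    using verification_op_eigenbasis[OF psi V U eig] \<sigma>c unfolding q_def by metis
  have lam_nonneg: "0 \<le> lam k" if "k < n" for k
    using psd_eigenvalue_nonneg[OF \<Omega>_psd u] eig[OF that] unitary_col_cscalar_prod[OF U that that]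
    by simp
  have "lam k \<le> second_eig \<Omega>" if "k < n" "k \<noteq> k0" for k
  proof (rule eigenvector_le_second_eig[OF _ u _ eig[OF that(1)]])
    show "col U k \<noteq> 0\<^sub>v n" using unitary_col_cscalar_prod[OF U that(1) that(1)] by auto
  qed (use H unique that in \<open>auto simp: hermitian_def\<close>)
  then have "(\<Sum>k<n. lam k * q k) \<le> q k0 + second_eig \<Omega> * (1 - q k0)"
    using q_sum q_nonneg k0 by (intro convex_combination_le_except) auto
  then show "Re (mtrace (\<Omega> * \<sigma>)) \<le> 1 - spectral_gap \<Omega> * (1 - Re ((\<sigma> *\<^sub>v \<psi>) \<bullet>c \<psi>))"
    using trace q0 by (simp add: spectral_gap_def algebra_simps)
  show "0 \<le> Re (mtrace (\<Omega> * \<sigma>))"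
    unfolding trace using lam_nonneg q_nonneg by (intro sum_nonneg mult_nonneg_nonneg) auto
qed

lemma prod_le_mean_power:
  fixes x :: "'a \<Rightarrow> real"
  assumes "finite S" and x: "\<And>i. i \<in> S \<Longrightarrow> 0 \<le> x i"
  shows "(\<Prod>i\<in>S. x i) \<le> ((\<Sum>i\<in>S. x i) / card S) ^ card S"
proof (cases "S = {}")
  case False
  let ?p = "\<Prod>i\<in>S. x i" and ?N = "card S"
  have N: "?N > 0" using assms(1) False by (simp add: card_gt_0_iff)
  have "?p = (?p powr (1 / ?N)) ^ ?N"
  proof (cases "?p = 0")
    case False
    then have "?p > 0" using x by (simp add: prod_nonneg order_less_le)
    then show ?thesis using N by (simp add: powr_realpow[symmetric] powr_powr)
  qed (use N in simp)
  also have "\<dots> \<le> ((\<Sum>i\<in>S. x i) / ?N) ^ ?N"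
    using arith_geom_mean[OF assms(1) False x] by (intro power_mono) (auto simp: sum_divide_distrib)
  finally show ?thesis .
qed simp

theorem proposition1:
  fixes n N :: nat and \<psi> :: "complex vec" and \<Omega> :: "complex mat"
    and \<sigma> :: "nat \<Rightarrow> complex mat"
  assumes "unit_vec n \<psi>"
    and "verification_op n \<psi> \<Omega>"
    and "\<And>j. j \<in> {1..N} \<Longrightarrow> density_op n (\<sigma> j)"
  shows "(\<Prod>j=1..N. Re (mtrace (\<Omega> * \<sigma> j)))
         \<le> (1 - spectral_gap \<Omega> *
               ((\<Sum>j=1..N. 1 - Re ((\<sigma> j *\<^sub>v \<psi>) \<bullet>c \<psi>)) / real N)) ^ N"
proof (cases "N = 0")
  case False
  define b where "b j = 1 - spectral_gap \<Omega> * (1 - Re ((\<sigma> j *\<^sub>v \<psi>) \<bullet>c \<psi>))" for j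
  note bound = verification_op_trace_bound[OF assms(1,2) assms(3)]
  have "(\<Prod>j=1..N. Re (mtrace (\<Omega> * \<sigma> j))) \<le> (\<Prod>j=1..N. b j)"
    using bound unfolding b_def by (intro prod_mono) auto
  also have "\<dots> \<le> ((\<Sum>j=1..N. b j) / real N) ^ N"
    using prod_le_mean_power[of "{1..N}" b] bound unfolding b_def by force
  also have "(\<Sum>j=1..N. b j) / real N =
      1 - spectral_gap \<Omega> * ((\<Sum>j=1..N. 1 - Re ((\<sigma> j *\<^sub>v \<psi>) \<bullet>c \<psi>)) / real N)"
    using False unfolding b_def by (simp add: sum_subtractf sum_distrib_left[symmetric] field_simps)
  finally show ?thesis .
qed simp

end
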